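(* Consider the bucketing algorithm described in the context, with arbitrary parameters $r\mid d$, $k=d/r$, $\delta$ with $\delta k\in\mathbb Z$, applied (under a fixed coordinate permutation) to a uniformly random instance of $\mathcal{CP}_{d,\lambda,\gamma}$. Let $(A_0,B_0)$ be the root and, for $i=1,\dots,r$, let $(A_i,B_i)$ be the child of $(A_{i-1},B_{i-1})$ obtained from an independent uniform $\vec z_i\in\mathbb F_2^k$. Then with $p=\binom{k}{\delta k}2^{-k}$, \[\mathbb E\big[|A_i|\cdot|B_i|\big]\le \mathbb E\big[|A_{i-1}|\cdot|B_{i-1}|\big]\,p^2+1\quad(i=1,\dots,r),\] and consequently $\mathbb E[|A_r|\cdot|B_r|]\le 2^{2\lambda d}p^{2r}+r$, the expectation being over the input lists and the choices of the $\vec z_i$.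
   Context: $\mathrm{wt}$ is Hamming weight. For $\vec v\in\mathbb F_2^d$ and $I=\{i_1<\dots<i_m\}\subseteq[d]$, $\vec v_I=(v_{i_1},\dots,v_{i_m})$. For $r\mid d$ and $i\in[r]$, the $i$-th block is $B_{i,r}=[(i-1)\frac dr+1,\ i\frac dr]$. Problem $\mathcal{CP}_{d,\lambda,\gamma}$ (uniform version): two lists $L_1=(\vec v_i)_{i\in[2^{\lambda d}]}$, $L_2=(\vec w_i)_{i\in[2^{\lambda d}]}$ of vectors in $\mathbb F_2^d$, all entries independent and uniformly random, except for one planted pair $(\vec x,\vec y)\in L_1\times L_2$ with $\mathrm{wt}(\vec x+\vec y)=\gamma d$; for every $i,j$ the vectors $\vec v_i,\vec w_j$ are independent. Bucketing step of the algorithm: the root node is $(A_0,B_0)=(L_1,L_2)$; a child of a node $(A,B)$ at level $i-1$ determined by $\vec z\in\mathbb F_2^k$ is $(A',B')$ with $A'=\{\vec v\in A:\mathrm{wt}(\vec v_{B_{i,r}}+\vec z)=\delta k\}$ and $B'=\{\vec w\in B:\mathrm{wt}(\vec w_{B_{i,r}}+\vec z)=\delta k\}$. *)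

theory Defs
  imports "HOL-Probability.Probability" "HOL-Combinatorics.Permutations"
begin

text \<open>Vectors in F_2^d are boolean lists of length d; addition is componentwise xor.\<close>

definition vecs :: "nat \<Rightarrow> bool list set" where
  "vecs d = {v. length v = d}"

definition wt :: "bool list \<Rightarrow> nat" where
  "wt v = length (filter id v)"

definition vadd :: "bool list \<Rightarrow> bool list \<Rightarrow> bool list" where
  "vadd u v = map2 (\<noteq>) u v"

text \<open>The i-th block (i >= 1, 0-indexed coordinates (i-1)k,...,ik-1) of the vector v
  after permuting its coordinates by pi.\<close>
definition block_of :: "(nat \<Rightarrow> nat) \<Rightarrow> nat \<Rightarrow> nat \<Rightarrow> bool list \<Rightarrow> bool list" where
  "block_of \<pi> k i v = map (\<lambda>j. v ! \<pi> j) [(i - 1) * k..<i * k]"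

definition uniform_list :: "nat \<Rightarrow> nat \<Rightarrow> bool list list pmf" where
  "uniform_list N d = pmf_of_set {L. length L = N \<and> set L \<subseteq> vecs d}"

text \<open>Random instance of CP_{d,lambda,gamma}: lists of length N = 2^(lambda d), all entries
  uniform and independent, except that the planted pair (L1!i0, L2!j0) satisfies
  L2!j0 = L1!i0 + e with e uniform of weight g = gamma d.\<close>
definition CP_instance :: "nat \<Rightarrow> nat \<Rightarrow> nat \<Rightarrow> nat \<Rightarrow> nat \<Rightarrow> (bool list list \<times> bool list list) pmf" where
  "CP_instance d N g i0 j0 =
     do { L1 \<leftarrow> uniform_list N d;
          L2 \<leftarrow> uniform_list N d;
          e \<leftarrow> pmf_of_set {e \<in> vecs d. wt e = g};
          return_pmf (L1, L2[j0 := vadd (L1 ! i0) e]) }"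

text \<open>Nodes are pairs of index sets into L1 and L2 (so that |A| counts list entries).\<close>
definition child :: "(nat \<Rightarrow> nat) \<Rightarrow> nat \<Rightarrow> nat \<Rightarrow> nat \<Rightarrow> bool list list \<Rightarrow> bool list list
    \<Rightarrow> nat set \<times> nat set \<Rightarrow> bool list \<Rightarrow> nat set \<times> nat set" where
  "child \<pi> k w i L1 L2 AB z =
     ({a \<in> fst AB. wt (vadd (block_of \<pi> k i (L1 ! a)) z) = w},
      {b \<in> snd AB. wt (vadd (block_of \<pi> k i (L2 ! b)) z) = w})"

fun node :: "(nat \<Rightarrow> nat) \<Rightarrow> nat \<Rightarrow> nat \<Rightarrow> bool list list \<Rightarrow> bool list list \<Rightarrow> bool list list
    \<Rightarrow> nat \<Rightarrow> nat set \<times> nat set" where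
  "node \<pi> k w L1 L2 zs 0 = ({..<length L1}, {..<length L2})"
| "node \<pi> k w L1 L2 zs (Suc i) = child \<pi> k w (Suc i) L1 L2 (node \<pi> k w L1 L2 zs i) (zs ! i)"

text \<open>E[|A_i| |B_i|] over the instance and the independent uniform z_1..z_r (zs ! (i-1) = z_i).\<close>
definition expected_prod ::
  "nat \<Rightarrow> nat \<Rightarrow> nat \<Rightarrow> nat \<Rightarrow> nat \<Rightarrow> (nat \<Rightarrow> nat) \<Rightarrow> nat \<Rightarrow> nat \<Rightarrow> nat \<Rightarrow> nat \<Rightarrow> real" where
  "expected_prod d N g i0 j0 \<pi> k w r i =
     measure_pmf.expectation (pair_pmf (CP_instance d N g i0 j0) (uniform_list r k))
       (\<lambda>((L1, L2), zs). real (card (fst (node \<pi> k w L1 L2 zs i)) * card (snd (node \<pi> k w L1 L2 zs i))))"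

end

theory Submission
  imports Defs
begin

(* Over a uniform finite sample space the expectation becomes (1/|Omega|) times the sum, over
   index pairs (a, b), of the number of samples in which pair (a, b) survives the first i levels.
   For any pair other than the planted one the two vectors are independent and uniform, so
   translating the i-th block of each of them and the i-th centre by arbitrary vectors is an
   involution of the sample space that keeps survival at the earlier levels.  Hence among the
   samples in which the pair survives level i - 1, the level-i data (two blocks and a centre) is
   uniform on (F_2^k)^3, and exactly a fraction p^2 of them also survives level i.  The planted
   pair contributes at most 1, which gives the recurrence; iterating it gives the bound. *)

section \<open>Vectors over F_2\<close>

lemma in_vecs_iff [simp]: "v \<in> vecs d \<longleftrightarrow> length v = d"
  by (simp add: vecs_def)

lemma finite_vecs [simp]: "finite (vecs d)"
  and card_vecs: "card (vecs d) = 2 ^ d"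
  using finite_lists_length_eq[of "UNIV :: bool set" d] card_lists_length_eq[of "UNIV :: bool set" d]
  by (simp_all add: vecs_def)

lemma length_vadd [simp]: "length (vadd u v) = min (length u) (length v)"
  by (simp add: vadd_def)

lemma nth_vadd [simp]: "j < length u \<Longrightarrow> j < length v \<Longrightarrow> vadd u v ! j = (u ! j \<noteq> v ! j)"
  by (simp add: vadd_def)

lemma vadd_commute: "length u = length v \<Longrightarrow> vadd u v = vadd v u"
  by (rule nth_equalityI) auto

lemma vadd_vadd_cancel_right [simp]: "length u = length v \<Longrightarrow> vadd (vadd u v) v = u"
  by (rule nth_equalityI) auto

lemma vadd_vadd_cancel_left [simp]: "length u = length v \<Longrightarrow> vadd u (vadd u v) = v"
  by (rule nth_equalityI) auto

lemma vadd_right_commute: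
  "length u = length v \<Longrightarrow> length u = length x \<Longrightarrow> vadd (vadd u v) x = vadd (vadd u x) v"
  by (rule nth_equalityI) auto

lemma wt_eq_card: "wt v = card {j. j < length v \<and> v ! j}"
  unfolding wt_def using length_filter_conv_card[of id v] by simp

lemma card_vecs_wt: "card {v \<in> vecs k. wt v = w} = k choose w"
proof -
  have "bij_betw (\<lambda>v. {j. j < k \<and> v ! j}) {v \<in> vecs k. wt v = w} {B. B \<subseteq> {..<k} \<and> card B = w}"
  proof (rule bij_betw_byWitness[where f' = "\<lambda>B. map (\<lambda>j. j \<in> B) [0..<k]"])
    have "{j. j < k \<and> map (\<lambda>j. j \<in> B) [0..<k] ! j} = B" if "B \<subseteq> {..<k}" for B
      using that by auto
    then show "(\<lambda>B. map (\<lambda>j. j \<in> B) [0..<k]) ` {B. B \<subseteq> {..<k} \<and> card B = w} \<subseteq> {v \<in> vecs k. wt v = w}"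
      by (auto simp: wt_eq_card)
  qed (auto simp: wt_eq_card intro: nth_equalityI)
  then show ?thesis
    using n_subsets[of "{..<k}" w] by (simp add: bij_betw_same_card)
qed

lemma bij_betw_involution:
  assumes "S ` A \<subseteq> B" "S ` B \<subseteq> A" "\<And>x. x \<in> A \<union> B \<Longrightarrow> S (S x) = x"
  shows "bij_betw S A B"
  using assms by (intro bij_betw_byWitness[where f' = S]) auto

lemma card_vecs_wt_vadd:
  assumes "length h = k"
  shows "card {v \<in> vecs k. wt (vadd v h) = w} = k choose w"
proof -
  have "bij_betw (\<lambda>v. vadd v h) {v \<in> vecs k. wt (vadd v h) = w} {v \<in> vecs k. wt v = w}"
    by (rule bij_betw_involution) (auto simp: assms)
  then show ?thesis
    using card_vecs_wt by (simp add: bij_betw_same_card)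
qed

lemma card_triples_wt_vadd:
  "card {(f, g, h) \<in> vecs k \<times> vecs k \<times> vecs k. wt (vadd f h) = w \<and> wt (vadd g h) = w}
     = 2 ^ k * (k choose w) ^ 2"
proof -
  let ?A = "\<lambda>h. {f \<in> vecs k. wt (vadd f h) = w}"
  have "{(f, g, h) \<in> vecs k \<times> vecs k \<times> vecs k. wt (vadd f h) = w \<and> wt (vadd g h) = w}
      = (\<lambda>(h, f, g). (f, g, h)) ` (SIGMA h:vecs k. ?A h \<times> ?A h)"
    by (force simp: image_iff)
  moreover have "inj_on (\<lambda>(h, f, g). (f, g, h)) (SIGMA h:vecs k. ?A h \<times> ?A h)"
    by (auto simp: inj_on_def)
  moreover have "card (SIGMA h:vecs k. ?A h \<times> ?A h) = (\<Sum>h\<in>vecs k. (k choose w) ^ 2)"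
    by (simp add: card_cartesian_product card_vecs_wt_vadd power2_eq_square
        flip: in_vecs_iff)
  ultimately show ?thesis
    by (simp add: card_image card_vecs)
qed

section \<open>Blocks\<close>

lemma length_block_of [simp]: "0 < i \<Longrightarrow> length (block_of \<pi> k i v) = k"
  by (cases i) (simp_all add: block_of_def)

lemma nth_block_of: "0 < i \<Longrightarrow> j < k \<Longrightarrow> block_of \<pi> k i v ! j = v ! \<pi> ((i - 1) * k + j)"
  by (cases i) (simp_all add: block_of_def)

(* The vector that equals u on the i-th block and vanishes outside it. *)
definition block_embed :: "(nat \<Rightarrow> nat) \<Rightarrow> nat \<Rightarrow> nat \<Rightarrow> nat \<Rightarrow> bool list \<Rightarrow> bool list" where
  "block_embed \<pi> d k i u =
     map (\<lambda>j. (i - 1) * k \<le> inv \<pi> j \<and> inv \<pi> j < i * k \<and> u ! (inv \<pi> j - (i - 1) * k)) [0..<d]"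

lemma length_block_embed [simp]: "length (block_embed \<pi> d k i u) = d"
  by (simp add: block_embed_def)

lemma nth_block_embed:
  assumes "\<pi> permutes {..<d}" "m < d"
  shows "block_embed \<pi> d k i u ! \<pi> m = ((i - 1) * k \<le> m \<and> m < i * k \<and> u ! (m - (i - 1) * k))"
  using assms permutes_in_image[OF assms(1)] permutes_inverses(2)[OF assms(1)]
  by (simp add: block_embed_def)

lemma in_block_iff:
  fixes j k l i :: nat
  assumes "0 < l" "0 < i" "j < k"
  shows "(i - 1) * k \<le> (l - 1) * k + j \<and> (l - 1) * k + j < i * k \<longleftrightarrow> l = i"
proof (cases "l = i")
  case True
  with assms show ?thesis by (cases i) auto
next
  case False
  then consider "l + 1 \<le> i" | "i + 1 \<le> l" by linarith
  then have "(l - 1) * k + k \<le> (i - 1) * k \<or> i * k \<le> (l - 1) * k"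
  proof cases
    case 1
    then have "l * k \<le> (i - 1) * k" by (intro mult_le_mono1) linarith
    then show ?thesis using \<open>0 < l\<close> by (cases l) auto
  next
    case 2
    then show ?thesis by (intro disjI2 mult_le_mono1) linarith
  qed
  with False assms show ?thesis
    by (cases i) auto
qed

lemma block_of_vadd_block_embed:
  assumes \<pi>: "\<pi> permutes {..<d}" and "0 < i" "0 < l" "l * k \<le> d"
    and "length v = d" "length u = k"
  shows "block_of \<pi> k l (vadd v (block_embed \<pi> d k i u))
           = (if l = i then vadd (block_of \<pi> k l v) u else block_of \<pi> k l v)"
proof (rule nth_equalityI)
  fix j assume "j < length (block_of \<pi> k l (vadd v (block_embed \<pi> d k i u)))"
  then have j: "j < k" using assms by simp
  define m where "m = (l - 1) * k + j"
  have "l * k = (l - 1) * k + k" using assms by (cases l) auto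
  then have m: "m < d" using assms j unfolding m_def by linarith
  have "\<pi> m < d" using permutes_in_image[OF \<pi>] m by simp
  then have "block_of \<pi> k l (vadd v (block_embed \<pi> d k i u)) ! j = (v ! \<pi> m \<noteq> (l = i \<and> u ! j))"
    using assms j nth_block_embed[OF \<pi> m, of k i u] in_block_iff[of l i j k]
    by (auto simp: nth_block_of m_def)
  then show "block_of \<pi> k l (vadd v (block_embed \<pi> d k i u)) ! j
      = (if l = i then vadd (block_of \<pi> k l v) u else block_of \<pi> k l v) ! j"
    using assms j by (simp add: nth_block_of m_def)
qed (use assms in simp)

section \<open>Survival and block translations\<close>

lemma card_preimage_uniform_fibres:
  fixes f :: "'a \<Rightarrow> 'b"
  assumes "finite E" "finite K" "f ` E \<subseteq> K" "G \<subseteq> K"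
    and fibres: "\<And>t t'. t \<in> K \<Longrightarrow> t' \<in> K \<Longrightarrow> card {x \<in> E. f x = t} = card {x \<in> E. f x = t'}"
  shows "card {x \<in> E. f x \<in> G} * card K = card E * card G"
proof (cases "K = {}")
  case True
  then have "E = {}" "G = {}" using assms(3,4) by auto
  then show ?thesis by simp
next
  case False
  then obtain t0 where t0: "t0 \<in> K" by auto
  define n where "n = card {x \<in> E. f x = t0}"
  have card_preimage: "card {x \<in> E. f x \<in> H} = card H * n" if "H \<subseteq> K" for H
  proof -
    have "finite H" using that \<open>finite K\<close> finite_subset by blast
    have "card {x \<in> E. f x \<in> H} = card (\<Union>t\<in>H. {x \<in> E. f x = t})"
      by (rule arg_cong[where f = card]) auto
    also have "\<dots> = (\<Sum>t\<in>H. card {x \<in> E. f x = t})"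
      using \<open>finite H\<close> \<open>finite E\<close> by (intro card_UN_disjoint) auto
    also have "\<dots> = (\<Sum>t\<in>H. n)"
      unfolding n_def using that t0 by (intro sum.cong refl fibres) auto
    finally show ?thesis by simp
  qed
  have "{x \<in> E. f x \<in> K} = E" using assms(3) by auto
  then have "card E = card K * n" using card_preimage[of K] by simp
  then show ?thesis using card_preimage[OF \<open>G \<subseteq> K\<close>] by simp
qed

definition shift_at :: "bool list list \<Rightarrow> nat \<Rightarrow> bool list \<Rightarrow> bool list list" where
  "shift_at L a x = L[a := vadd (L ! a) x]"

lemma length_shift_at [simp]: "length (shift_at L a x) = length L"
  by (simp add: shift_at_def)

lemma nth_shift_at:
  "b < length L \<Longrightarrow> shift_at L a x ! b = (if b = a then vadd (L ! a) x else L ! b)"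
  by (simp add: shift_at_def)

lemma shift_at_shift_at [simp]:
  "a < length L \<Longrightarrow> length (L ! a) = length x \<Longrightarrow> shift_at (shift_at L a x) a x = L"
  by (simp add: shift_at_def)

lemma shift_at_swap:
  "a \<noteq> b \<Longrightarrow> shift_at (shift_at L a x) b y = shift_at (shift_at L b y) a x"
  by (simp add: shift_at_def list_update_swap)

definition survives :: "(nat \<Rightarrow> nat) \<Rightarrow> nat \<Rightarrow> nat \<Rightarrow> bool list list \<Rightarrow> nat \<Rightarrow> bool list \<Rightarrow> bool" where
  "survives \<pi> k w zs i v \<longleftrightarrow> (\<forall>l \<in> {1..i}. wt (vadd (block_of \<pi> k l v) (zs ! (l - 1))) = w)"

lemma survives_0 [simp]: "survives \<pi> k w zs 0 v"
  by (simp add: survives_def)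

lemma survives_Suc:
  "survives \<pi> k w zs (Suc i) v \<longleftrightarrow>
     survives \<pi> k w zs i v \<and> wt (vadd (block_of \<pi> k (Suc i) v) (zs ! i)) = w"
  by (simp add: survives_def atLeastAtMostSuc_conv conj_commute)

lemma survives_level:
  "0 < i \<Longrightarrow> survives \<pi> k w zs i v \<longleftrightarrow>
     survives \<pi> k w zs (i - 1) v \<and> wt (vadd (block_of \<pi> k i v) (zs ! (i - 1))) = w"
  by (cases i) (simp_all add: survives_Suc)

lemma node_eq_survivors:
  "node \<pi> k w L1 L2 zs i =
     ({a. a < length L1 \<and> survives \<pi> k w zs i (L1 ! a)}, {b. b < length L2 \<and> survives \<pi> k w zs i (L2 ! b)})"
  by (induction i) (auto simp: child_def survives_Suc)

lemma survives_shift_later_block: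
  assumes \<pi>: "\<pi> permutes {..<d}" and "0 < i" "i * k \<le> d" "length v = d" "length u = k"
  shows "survives \<pi> k w (shift_at zs (i - 1) s) (i - 1) (vadd v (block_embed \<pi> d k i u))
           \<longleftrightarrow> survives \<pi> k w zs (i - 1) v"
  unfolding survives_def
proof (rule ball_cong[OF refl])
  fix l assume l: "l \<in> {1..i - 1}"
  then have "l * k \<le> d" using assms by (meson atLeastAtMost_iff diff_le_self le_trans mult_le_mono1)
  moreover have "l \<noteq> i" "l - 1 \<noteq> i - 1" using l by auto
  ultimately have "block_of \<pi> k l (vadd v (block_embed \<pi> d k i u)) = block_of \<pi> k l v"
    and "shift_at zs (i - 1) s ! (l - 1) = zs ! (l - 1)"
    using l assms by (simp_all add: block_of_vadd_block_embed shift_at_def)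
  then show "wt (vadd (block_of \<pi> k l (vadd v (block_embed \<pi> d k i u))) (shift_at zs (i - 1) s ! (l - 1))) = w
      \<longleftrightarrow> wt (vadd (block_of \<pi> k l v) (zs ! (l - 1))) = w"
    by (simp only:)
qed

locale block_shift =
  fixes \<pi> :: "nat \<Rightarrow> nat" and d k r i :: nat
    and \<Omega> :: "'s set" and X Y :: "'s \<Rightarrow> bool list" and Z :: "'s \<Rightarrow> bool list list"
    and T :: "bool list \<Rightarrow> bool list \<Rightarrow> bool list \<Rightarrow> 's \<Rightarrow> 's"
  assumes perm: "\<pi> permutes {..<d}" and level: "0 < i" "i \<le> r" and blocks_fit: "r * k \<le> d"
    and finite_\<Omega>: "finite \<Omega>"
    and length_X: "\<omega> \<in> \<Omega> \<Longrightarrow> length (X \<omega>) = d"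
    and length_Y: "\<omega> \<in> \<Omega> \<Longrightarrow> length (Y \<omega>) = d"
    and length_Z: "\<omega> \<in> \<Omega> \<Longrightarrow> length (Z \<omega>) = r"
    and Z_vecs: "\<omega> \<in> \<Omega> \<Longrightarrow> set (Z \<omega>) \<subseteq> vecs k"
    and T_closed: "\<lbrakk>u \<in> vecs k; v \<in> vecs k; s \<in> vecs k; \<omega> \<in> \<Omega>\<rbrakk> \<Longrightarrow> T u v s \<omega> \<in> \<Omega>"
    and T_T: "\<lbrakk>u \<in> vecs k; v \<in> vecs k; s \<in> vecs k; \<omega> \<in> \<Omega>\<rbrakk> \<Longrightarrow> T u v s (T u v s \<omega>) = \<omega>"
    and X_T: "\<lbrakk>u \<in> vecs k; v \<in> vecs k; s \<in> vecs k; \<omega> \<in> \<Omega>\<rbrakk> \<Longrightarrow>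
      X (T u v s \<omega>) = vadd (X \<omega>) (block_embed \<pi> d k i u)"
    and Y_T: "\<lbrakk>u \<in> vecs k; v \<in> vecs k; s \<in> vecs k; \<omega> \<in> \<Omega>\<rbrakk> \<Longrightarrow>
      Y (T u v s \<omega>) = vadd (Y \<omega>) (block_embed \<pi> d k i v)"
    and Z_T: "\<lbrakk>u \<in> vecs k; v \<in> vecs k; s \<in> vecs k; \<omega> \<in> \<Omega>\<rbrakk> \<Longrightarrow>
      Z (T u v s \<omega>) = shift_at (Z \<omega>) (i - 1) s"
begin

definition both_survive :: "nat \<Rightarrow> nat \<Rightarrow> 's set" where
  "both_survive w l = {\<omega> \<in> \<Omega>. survives \<pi> k w (Z \<omega>) l (X \<omega>) \<and> survives \<pi> k w (Z \<omega>) l (Y \<omega>)}"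

definition level_data :: "'s \<Rightarrow> bool list \<times> bool list \<times> bool list" where
  "level_data \<omega> = (block_of \<pi> k i (X \<omega>), block_of \<pi> k i (Y \<omega>), Z \<omega> ! (i - 1))"

lemma level_fits: "i * k \<le> d"
  using level blocks_fit by (meson le_trans mult_le_mono1)

lemma level_data_vecs: "\<omega> \<in> \<Omega> \<Longrightarrow> level_data \<omega> \<in> vecs k \<times> vecs k \<times> vecs k"
  using level length_Z Z_vecs nth_mem[of "i - 1" "Z \<omega>"] by (force simp: level_data_def)

lemma level_data_T:
  assumes "u \<in> vecs k" "v \<in> vecs k" "s \<in> vecs k" "\<omega> \<in> \<Omega>"
  shows "level_data (T u v s \<omega>) = (vadd (block_of \<pi> k i (X \<omega>)) u, vadd (block_of \<pi> k i (Y \<omega>)) v,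
    vadd (Z \<omega> ! (i - 1)) s)"
  using assms perm level level_fits length_X length_Y length_Z
  by (simp add: level_data_def X_T Y_T Z_T block_of_vadd_block_embed nth_shift_at)

lemma both_survive_T:
  assumes "u \<in> vecs k" "v \<in> vecs k" "s \<in> vecs k" "\<omega> \<in> both_survive w (i - 1)"
  shows "T u v s \<omega> \<in> both_survive w (i - 1)"
proof -
  have \<omega>: "\<omega> \<in> \<Omega>" using assms(4) by (simp add: both_survive_def)
  note shift = survives_shift_later_block[OF perm level(1) level_fits]
  have "survives \<pi> k w (Z (T u v s \<omega>)) (i - 1) (X (T u v s \<omega>))
      \<longleftrightarrow> survives \<pi> k w (Z \<omega>) (i - 1) (X \<omega>)"
    unfolding X_T[OF assms(1-3) \<omega>] Z_T[OF assms(1-3) \<omega>]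
    by (rule shift[OF length_X[OF \<omega>]]) (use assms in simp)
  moreover have "survives \<pi> k w (Z (T u v s \<omega>)) (i - 1) (Y (T u v s \<omega>))
      \<longleftrightarrow> survives \<pi> k w (Z \<omega>) (i - 1) (Y \<omega>)"
    unfolding Y_T[OF assms(1-3) \<omega>] Z_T[OF assms(1-3) \<omega>]
    by (rule shift[OF length_Y[OF \<omega>]]) (use assms in simp)
  ultimately show ?thesis
    using assms \<omega> by (simp add: both_survive_def T_closed)
qed

lemma level_fibre_shift:
  assumes "(f, g, h) \<in> vecs k \<times> vecs k \<times> vecs k" "(f', g', h') \<in> vecs k \<times> vecs k \<times> vecs k"
  shows "T (vadd f f') (vadd g g') (vadd h h') ` {\<omega> \<in> both_survive w (i - 1). level_data \<omega> = (f, g, h)}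
           \<subseteq> {\<omega> \<in> both_survive w (i - 1). level_data \<omega> = (f', g', h')}"
proof (rule image_subsetI)
  fix \<omega> assume "\<omega> \<in> {\<omega> \<in> both_survive w (i - 1). level_data \<omega> = (f, g, h)}"
  then have \<omega>: "\<omega> \<in> both_survive w (i - 1)" "level_data \<omega> = (f, g, h)" by auto
  have shift_vecs: "vadd f f' \<in> vecs k" "vadd g g' \<in> vecs k" "vadd h h' \<in> vecs k"
    using assms by auto
  have "\<omega> \<in> \<Omega>" using \<omega>(1) by (simp add: both_survive_def)
  then have "level_data (T (vadd f f') (vadd g g') (vadd h h') \<omega>) = (f', g', h')"
    using level_data_T[OF shift_vecs] \<omega>(2) assms by (simp add: level_data_def)
  with both_survive_T[OF shift_vecs \<omega>(1)]
  show "T (vadd f f') (vadd g g') (vadd h h') \<omega>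
      \<in> {\<omega> \<in> both_survive w (i - 1). level_data \<omega> = (f', g', h')}"
    by simp
qed

lemma card_level_fibres_eq:
  assumes "t \<in> vecs k \<times> vecs k \<times> vecs k" "t' \<in> vecs k \<times> vecs k \<times> vecs k"
  shows "card {\<omega> \<in> both_survive w (i - 1). level_data \<omega> = t}
       = card {\<omega> \<in> both_survive w (i - 1). level_data \<omega> = t'}"
proof -
  obtain f g h f' g' h' where t: "t = (f, g, h)" "t' = (f', g', h')"
    by (cases t, cases t') auto
  have shift_vecs: "vadd f f' \<in> vecs k" "vadd g g' \<in> vecs k" "vadd h h' \<in> vecs k"
    using assms t by auto
  have "bij_betw (T (vadd f f') (vadd g g') (vadd h h')) {\<omega> \<in> both_survive w (i - 1). level_data \<omega> = t}
    {\<omega> \<in> both_survive w (i - 1). level_data \<omega> = t'}"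
  proof (rule bij_betw_involution)
    show "T (vadd f f') (vadd g g') (vadd h h') ` {\<omega> \<in> both_survive w (i - 1). level_data \<omega> = t}
      \<subseteq> {\<omega> \<in> both_survive w (i - 1). level_data \<omega> = t'}"
      using level_fibre_shift[of f g h f' g' h'] assms t by simp
    show "T (vadd f f') (vadd g g') (vadd h h') ` {\<omega> \<in> both_survive w (i - 1). level_data \<omega> = t'}
      \<subseteq> {\<omega> \<in> both_survive w (i - 1). level_data \<omega> = t}"
      using level_fibre_shift[of f' g' h' f g h] assms t by (simp add: vadd_commute)
    have "both_survive w (i - 1) \<subseteq> \<Omega>" by (auto simp: both_survive_def)
    then show "T (vadd f f') (vadd g g') (vadd h h') (T (vadd f f') (vadd g g') (vadd h h') \<omega>) = \<omega>"
      if "\<omega> \<in> {\<omega> \<in> both_survive w (i - 1). level_data \<omega> = t}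
        \<union> {\<omega> \<in> both_survive w (i - 1). level_data \<omega> = t'}" for \<omega>
      using that T_T[OF shift_vecs] by blast
  qed
  then show ?thesis by (rule bij_betw_same_card)
qed

lemma finite_both_survive: "finite (both_survive w l)"
  using finite_\<Omega> by (simp add: both_survive_def)

theorem card_both_survive_step:
  "card (both_survive w i) * 2 ^ (2 * k) = card (both_survive w (i - 1)) * (k choose w) ^ 2"
proof -
  let ?K = "vecs k \<times> vecs k \<times> vecs k"
  let ?G = "{(f, g, h) \<in> ?K. wt (vadd f h) = w \<and> wt (vadd g h) = w}"
  have level_i: "both_survive w i = {\<omega> \<in> both_survive w (i - 1). level_data \<omega> \<in> ?G}"
  proof (rule set_eqI)
    fix \<omega>
    show "\<omega> \<in> both_survive w i \<longleftrightarrow> \<omega> \<in> {\<omega> \<in> both_survive w (i - 1). level_data \<omega> \<in> ?G}"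
    proof (cases "\<omega> \<in> \<Omega>")
      case True
      then show ?thesis
        using level_data_vecs[OF True]
        by (simp add: both_survive_def level_data_def survives_level[OF level(1)]) blast
    qed (simp add: both_survive_def)
  qed
  have "level_data ` both_survive w (i - 1) \<subseteq> ?K"
    using level_data_vecs unfolding both_survive_def by blast
  then have preimage: "card {\<omega> \<in> both_survive w (i - 1). level_data \<omega> \<in> ?G} * card ?K
      = card (both_survive w (i - 1)) * card ?G"
    by (intro card_preimage_uniform_fibres finite_both_survive card_level_fibres_eq) auto
  have "card ?K = 2 ^ k * 2 ^ (2 * k)"
    by (simp add: card_cartesian_product card_vecs mult_2 power_add)
  with preimage have "card (both_survive w i) * (2 ^ k * 2 ^ (2 * k))
      = card (both_survive w (i - 1)) * (2 ^ k * (k choose w) ^ 2)"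
    unfolding level_i card_triples_wt_vadd by simp
  then show ?thesis
    by (simp add: mult.left_commute)
qed

end

section \<open>The planted sample space\<close>

definition vec_lists :: "nat \<Rightarrow> nat \<Rightarrow> bool list list set" where
  "vec_lists n d = {L. length L = n \<and> set L \<subseteq> vecs d}"

lemma finite_vec_lists [simp]: "finite (vec_lists n d)"
  using finite_lists_length_eq[OF finite_vecs, of d n] by (simp add: vec_lists_def conj_commute)

lemma vec_lists_nonempty: "vec_lists n d \<noteq> {}"
proof -
  have "replicate n (replicate d False) \<in> vec_lists n d" by (auto simp: vec_lists_def)
  then show ?thesis by blast
qed

lemma length_nth_vec_lists: "L \<in> vec_lists n d \<Longrightarrow> a < n \<Longrightarrow> length (L ! a) = d"
  using nth_mem by (fastforce simp: vec_lists_def)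

lemma shift_at_in_vec_lists:
  assumes "L \<in> vec_lists n d" "a < n" "length x = d"
  shows "shift_at L a x \<in> vec_lists n d"
proof -
  have "length (vadd (L ! a) x) = d"
    using length_nth_vec_lists[OF assms(1,2)] assms(3) by simp
  then show ?thesis
    using assms set_update_subset_insert[of L a "vadd (L ! a) x"]
    by (auto simp: vec_lists_def shift_at_def)
qed

lemma weight_vecs_nonempty: "g \<le> d \<Longrightarrow> {e \<in> vecs d. wt e = g} \<noteq> {}"
proof -
  assume "g \<le> d"
  then have "replicate g True @ replicate (d - g) False \<in> {e \<in> vecs d. wt e = g}"
    by (simp add: wt_def)
  then show ?thesis by blast
qed

lemma pmf_of_set_Times:
  assumes "finite A" "A \<noteq> {}" "finite B" "B \<noteq> {}"
  shows "pmf_of_set (A \<times> B) = pair_pmf (pmf_of_set A) (pmf_of_set B)"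
proof (rule pmf_eqI)
  fix x :: "'a \<times> 'b"
  show "pmf (pmf_of_set (A \<times> B)) x = pmf (pair_pmf (pmf_of_set A) (pmf_of_set B)) x"
    using assms by (cases x) (simp add: pmf_pair card_cartesian_product indicator_def)
qed

type_synonym sample = "bool list list \<times> bool list list \<times> bool list \<times> bool list list"

definition sample_space :: "nat \<Rightarrow> nat \<Rightarrow> nat \<Rightarrow> nat \<Rightarrow> nat \<Rightarrow> sample set" where
  "sample_space N d g r k = vec_lists N d \<times> vec_lists N d \<times> {e \<in> vecs d. wt e = g} \<times> vec_lists r k"

definition planted :: "nat \<Rightarrow> nat \<Rightarrow> sample \<Rightarrow> (bool list list \<times> bool list list) \<times> bool list list" where
  "planted i0 j0 = (\<lambda>(L1, L2, e, zs). ((L1, L2[j0 := vadd (L1 ! i0) e]), zs))"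

lemma finite_sample_space: "finite (sample_space N d g r k)"
  by (simp add: sample_space_def del: in_vecs_iff)

lemma sample_space_nonempty: "g \<le> d \<Longrightarrow> sample_space N d g r k \<noteq> {}"
  using vec_lists_nonempty weight_vecs_nonempty by (simp add: sample_space_def)

lemma instance_centres_eq_planted:
  assumes "g \<le> d"
  shows "pair_pmf (CP_instance d N g i0 j0) (uniform_list r k)
           = map_pmf (planted i0 j0) (pmf_of_set (sample_space N d g r k))"
proof -
  have "pmf_of_set (sample_space N d g r k) = pair_pmf (pmf_of_set (vec_lists N d))
      (pair_pmf (pmf_of_set (vec_lists N d))
        (pair_pmf (pmf_of_set {e \<in> vecs d. wt e = g}) (pmf_of_set (vec_lists r k))))"
    using vec_lists_nonempty weight_vecs_nonempty[OF assms]
    by (simp add: sample_space_def pmf_of_set_Times del: in_vecs_iff)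
  then show ?thesis
    unfolding CP_instance_def uniform_list_def vec_lists_def[symmetric]
    by (simp add: pair_pmf_def map_pmf_def bind_assoc_pmf bind_return_pmf planted_def)
qed

locale bucketing =
  fixes d N g i0 j0 r k w :: nat and \<pi> :: "nat \<Rightarrow> nat"
  assumes perm: "\<pi> permutes {..<d}" and blocks_fit: "r * k \<le> d" and weight_le: "g \<le> d"
    and planted_indices: "i0 < N" "j0 < N"
begin

abbreviation \<Omega> :: "sample set" where
  "\<Omega> \<equiv> sample_space N d g r k"

definition left_vec :: "nat \<Rightarrow> sample \<Rightarrow> bool list" where
  "left_vec a = (\<lambda>(L1, L2, e, zs). L1 ! a)"

definition right_vec :: "nat \<Rightarrow> sample \<Rightarrow> bool list" where
  "right_vec b = (\<lambda>(L1, L2, e, zs). L2[j0 := vadd (L1 ! i0) e] ! b)"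

definition centres :: "sample \<Rightarrow> bool list list" where
  "centres = (\<lambda>(L1, L2, e, zs). zs)"

definition pair_survivors :: "nat \<Rightarrow> nat \<times> nat \<Rightarrow> sample set" where
  "pair_survivors i = (\<lambda>(a, b). {\<omega> \<in> \<Omega>. survives \<pi> k w (centres \<omega>) i (left_vec a \<omega>)
                                         \<and> survives \<pi> k w (centres \<omega>) i (right_vec b \<omega>)})"

(* If b = j0 the right vector is L1 ! i0 + e, so it is translated through L1 ! i0; this needs
   a \<noteq> i0, i.e. that (a, b) is not the planted pair. *)
definition translate_pair :: "nat \<Rightarrow> nat \<Rightarrow> nat \<Rightarrow> bool list \<Rightarrow> bool list \<Rightarrow> bool list \<Rightarrow> sample \<Rightarrow> sample" where
  "translate_pair i a b u v s = (\<lambda>(L1, L2, e, zs).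
     if b = j0
     then (shift_at (shift_at L1 a (block_embed \<pi> d k i u)) i0 (block_embed \<pi> d k i v), L2, e,
           shift_at zs (i - 1) s)
     else (shift_at L1 a (block_embed \<pi> d k i u), shift_at L2 b (block_embed \<pi> d k i v), e,
           shift_at zs (i - 1) s))"

lemma translate_pair_properties:
  assumes "0 < i" "i \<le> r" "a < N" "b < N" "(a, b) \<noteq> (i0, j0)"
    and "u \<in> vecs k" "v \<in> vecs k" "s \<in> vecs k" "\<omega> \<in> \<Omega>"
  shows "translate_pair i a b u v s \<omega> \<in> \<Omega>" and "translate_pair i a b u v s (translate_pair i a b u v s \<omega>) = \<omega>"
    and "left_vec a (translate_pair i a b u v s \<omega>) = vadd (left_vec a \<omega>) (block_embed \<pi> d k i u)"
    and "right_vec b (translate_pair i a b u v s \<omega>) = vadd (right_vec b \<omega>) (block_embed \<pi> d k i v)"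
    and "centres (translate_pair i a b u v s \<omega>) = shift_at (centres \<omega>) (i - 1) s"
proof -
  obtain L1 L2 e zs where \<omega>: "\<omega> = (L1, L2, e, zs)" by (cases \<omega>)
  have mem: "L1 \<in> vec_lists N d" "L2 \<in> vec_lists N d" "length e = d" "wt e = g" "zs \<in> vec_lists r k"
    using assms(9) by (auto simp: \<omega> sample_space_def)
  have len: "length L1 = N" "length L2 = N" "length zs = r"
    using mem by (auto simp: vec_lists_def)
  have len_nth: "length (L1 ! a) = d" "length (L1 ! i0) = d" "length (L2 ! b) = d" "length (zs ! (i - 1)) = k"
    using mem assms planted_indices by (auto intro: length_nth_vec_lists)
  have i0a: "a \<noteq> i0" if "b = j0" using assms(5) that by auto
  show "translate_pair i a b u v s \<omega> \<in> \<Omega>"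
    using mem assms planted_indices len_nth
    by (auto simp: translate_pair_def \<omega> sample_space_def shift_at_in_vec_lists)
  show "translate_pair i a b u v s (translate_pair i a b u v s \<omega>) = \<omega>"
    using len len_nth assms i0a planted_indices
    by (auto simp: translate_pair_def \<omega> nth_shift_at shift_at_swap[of i0 a])
  show "left_vec a (translate_pair i a b u v s \<omega>) = vadd (left_vec a \<omega>) (block_embed \<pi> d k i u)"
    using len assms i0a by (auto simp: translate_pair_def \<omega> left_vec_def nth_shift_at)
  show "right_vec b (translate_pair i a b u v s \<omega>) = vadd (right_vec b \<omega>) (block_embed \<pi> d k i v)"
    using len len_nth assms i0a planted_indices mem(3)
    by (auto simp: translate_pair_def \<omega> right_vec_def nth_shift_at vadd_right_commute)
  show "centres (translate_pair i a b u v s \<omega>) = shift_at (centres \<omega>) (i - 1) s"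
    by (simp add: translate_pair_def \<omega> centres_def)
qed

lemma sample_space_memD:
  assumes "(L1, L2, e, zs) \<in> \<Omega>"
  shows "L1 \<in> vec_lists N d" "L2 \<in> vec_lists N d" "length e = d" "zs \<in> vec_lists r k"
  using assms by (auto simp: sample_space_def)

lemma length_left_vec: "\<omega> \<in> \<Omega> \<Longrightarrow> a < N \<Longrightarrow> length (left_vec a \<omega>) = d"
  by (cases \<omega>) (auto simp: left_vec_def dest: sample_space_memD intro: length_nth_vec_lists)

lemma length_right_vec:
  assumes "\<omega> \<in> \<Omega>" "b < N"
  shows "length (right_vec b \<omega>) = d"
proof -
  obtain L1 L2 e zs where \<omega>: "\<omega> = (L1, L2, e, zs)" by (cases \<omega>)
  note mem = sample_space_memD[OF assms(1)[unfolded \<omega>]]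
  then show ?thesis
    using assms(2) planted_indices length_nth_vec_lists[OF mem(1)] length_nth_vec_lists[OF mem(2)]
    by (auto simp: \<omega> right_vec_def nth_list_update vec_lists_def)
qed

lemma centres_in_vec_lists: "\<omega> \<in> \<Omega> \<Longrightarrow> centres \<omega> \<in> vec_lists r k"
  by (cases \<omega>) (auto simp: centres_def dest: sample_space_memD)

lemma block_shift_pair:
  assumes "0 < i" "i \<le> r" "a < N" "b < N" "(a, b) \<noteq> (i0, j0)"
  shows "block_shift \<pi> d k r i \<Omega> (left_vec a) (right_vec b) centres (translate_pair i a b)"
  by unfold_locales
    (use centres_in_vec_lists in \<open>simp_all add: assms perm blocks_fit finite_sample_space
      length_left_vec length_right_vec translate_pair_properties[OF assms] vec_lists_def\<close>)

lemma card_pair_survivors_step: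
  assumes "0 < i" "i \<le> r" "p \<in> {..<N} \<times> {..<N}" "p \<noteq> (i0, j0)"
  shows "card (pair_survivors i p) * 2 ^ (2 * k) = card (pair_survivors (i - 1) p) * (k choose w) ^ 2"
proof -
  obtain a b where p: "p = (a, b)" "a < N" "b < N" using assms(3) by auto
  interpret block_shift \<pi> d k r i \<Omega> "left_vec a" "right_vec b" centres "translate_pair i a b"
    using block_shift_pair assms p by blast
  have "pair_survivors l p = both_survive w l" for l
    by (simp add: pair_survivors_def both_survive_def p)
  then show ?thesis
    using card_both_survive_step by simp
qed

lemma pair_survivors_subset: "pair_survivors i p \<subseteq> \<Omega>"
  by (auto simp: pair_survivors_def split: prod.split)

lemma card_node_planted:
  assumes "\<omega> \<in> \<Omega>" "planted i0 j0 \<omega> = ((L1, L2), zs)"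
  shows "card (fst (node \<pi> k w L1 L2 zs i)) * card (snd (node \<pi> k w L1 L2 zs i))
           = card {p \<in> {..<N} \<times> {..<N}. \<omega> \<in> pair_survivors i p}"
proof -
  obtain M1 M2 e ys where \<omega>: "\<omega> = (M1, M2, e, ys)" by (cases \<omega>)
  have "length M1 = N" "length M2 = N"
    using sample_space_memD[OF assms(1)[unfolded \<omega>]] by (simp_all add: vec_lists_def)
  then have "fst (node \<pi> k w L1 L2 zs i) \<times> snd (node \<pi> k w L1 L2 zs i)
      = {p \<in> {..<N} \<times> {..<N}. \<omega> \<in> pair_survivors i p}"
    using assms by (auto simp: \<omega> planted_def node_eq_survivors pair_survivors_def left_vec_def
        right_vec_def centres_def)
  then show ?thesis
    by (metis card_cartesian_product)
qed

lemma expected_prod_eq_sum: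
  "expected_prod d N g i0 j0 \<pi> k w r i
     = (\<Sum>p \<in> {..<N} \<times> {..<N}. real (card (pair_survivors i p))) / real (card \<Omega>)"
proof -
  let ?F = "\<lambda>((L1, L2), zs).
    real (card (fst (node \<pi> k w L1 L2 zs i)) * card (snd (node \<pi> k w L1 L2 zs i)))"
  have "expected_prod d N g i0 j0 \<pi> k w r i
      = measure_pmf.expectation (pmf_of_set \<Omega>) (\<lambda>\<omega>. ?F (planted i0 j0 \<omega>))"
    by (simp add: expected_prod_def instance_centres_eq_planted[OF weight_le])
  also have "\<dots> = (\<Sum>\<omega> \<in> \<Omega>. ?F (planted i0 j0 \<omega>)) / card \<Omega>"
    by (rule integral_pmf_of_set[OF sample_space_nonempty[OF weight_le] finite_sample_space])
  also have "(\<Sum>\<omega> \<in> \<Omega>. ?F (planted i0 j0 \<omega>))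
      = real (\<Sum>\<omega> \<in> \<Omega>. card {p \<in> {..<N} \<times> {..<N}. \<omega> \<in> pair_survivors i p})"
    unfolding of_nat_sum
    by (intro sum.cong refl) (auto simp: card_node_planted simp flip: of_nat_mult split: prod.split)
  also have "(\<Sum>\<omega> \<in> \<Omega>. card {p \<in> {..<N} \<times> {..<N}. \<omega> \<in> pair_survivors i p})
      = (\<Sum>p \<in> {..<N} \<times> {..<N}. card (pair_survivors i p))"
  proof (intro sum_multicount_gen finite_sample_space)
    have "{\<omega> \<in> \<Omega>. \<omega> \<in> pair_survivors i p} = pair_survivors i p" for p
      using pair_survivors_subset by blast
    then show "\<forall>p \<in> {..<N} \<times> {..<N}.
        card {\<omega> \<in> \<Omega>. \<omega> \<in> pair_survivors i p} = card (pair_survivors i p)"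
      by simp
  qed simp
  finally show ?thesis by simp
qed

lemma real_card_pair_survivors_step:
  assumes "0 < i" "i \<le> r" "p \<in> {..<N} \<times> {..<N}" "p \<noteq> (i0, j0)"
  shows "real (card (pair_survivors i p))
           = (real (k choose w) / 2 ^ k) ^ 2 * real (card (pair_survivors (i - 1) p))"
proof -
  have "real (card (pair_survivors i p)) * 2 ^ (2 * k)
      = real (card (pair_survivors (i - 1) p)) * real (k choose w) ^ 2"
    using card_pair_survivors_step[OF assms] by (metis of_nat_mult of_nat_numeral of_nat_power)
  then show ?thesis
    by (simp add: field_simps power_mult[symmetric])
qed

lemma expected_prod_step:
  assumes "0 < i" "i \<le> r"
  shows "expected_prod d N g i0 j0 \<pi> k w r i
           \<le> expected_prod d N g i0 j0 \<pi> k w r (i - 1) * (real (k choose w) / 2 ^ k) ^ 2 + 1"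
proof -
  let ?P = "{..<N} \<times> {..<N}" and ?q = "(real (k choose w) / 2 ^ k) ^ 2"
  let ?S = "\<lambda>l. \<Sum>p \<in> ?P. real (card (pair_survivors l p))"
  have planted_pair: "(i0, j0) \<in> ?P" using planted_indices by simp
  have "?S i = (\<Sum>p \<in> ?P - {(i0, j0)}. real (card (pair_survivors i p)))
      + real (card (pair_survivors i (i0, j0)))"
    using sum.remove[OF _ planted_pair] by (simp add: add.commute)
  also have "\<dots> = ?q * (\<Sum>p \<in> ?P - {(i0, j0)}. real (card (pair_survivors (i - 1) p)))
      + real (card (pair_survivors i (i0, j0)))"
    using assms by (simp add: sum_distrib_left real_card_pair_survivors_step)
  also have "\<dots> \<le> ?q * ?S (i - 1) + real (card \<Omega>)"
  proof (intro add_mono mult_left_mono)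
    show "(\<Sum>p \<in> ?P - {(i0, j0)}. real (card (pair_survivors (i - 1) p))) \<le> ?S (i - 1)"
      by (intro sum_mono2) auto
    show "real (card (pair_survivors i (i0, j0))) \<le> real (card \<Omega>)"
      using pair_survivors_subset finite_sample_space by (simp add: card_mono)
  qed simp
  finally have "?S i \<le> ?q * ?S (i - 1) + real (card \<Omega>)" .
  moreover have "0 < real (card \<Omega>)"
    using finite_sample_space sample_space_nonempty[OF weight_le] by (simp add: card_gt_0_iff)
  ultimately show ?thesis
    by (simp add: expected_prod_eq_sum field_simps)
qed

lemma expected_prod_root: "expected_prod d N g i0 j0 \<pi> k w r 0 = real N ^ 2"
proof -
  have "pair_survivors 0 p = \<Omega>" for p
    by (auto simp: pair_survivors_def split: prod.split)
  moreover have "0 < real (card \<Omega>)"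
    using finite_sample_space sample_space_nonempty[OF weight_le] by (simp add: card_gt_0_iff)
  ultimately show ?thesis
    by (simp add: expected_prod_eq_sum card_cartesian_product power2_eq_square)
qed

end

lemma affine_recurrence_bound:
  fixes e :: "nat \<Rightarrow> real"
  assumes "0 \<le> q" "q \<le> 1" and step: "\<And>i. 0 < i \<Longrightarrow> i \<le> n \<Longrightarrow> e i \<le> e (i - 1) * q + 1"
  shows "e n \<le> e 0 * q ^ n + real n"
  using step
proof (induction n)
  case (Suc n)
  have "e (Suc n) \<le> e n * q + 1"
    using Suc.prems[of "Suc n"] by simp
  also have "\<dots> \<le> (e 0 * q ^ n + real n) * q + 1"
    using Suc assms(1) by (simp add: mult_right_mono)
  also have "\<dots> \<le> e 0 * q ^ Suc n + real (Suc n)"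
    using assms(2) mult_left_le[of q "real n"] by (simp add: algebra_simps)
  finally show ?case .
qed simp

theorem mainTheorem6:
  fixes d r k N g w i0 j0 :: nat and lam \<gamma> \<delta> :: real and \<pi> :: "nat \<Rightarrow> nat"
  assumes "0 < r" and "r dvd d" and "k = d div r"
    and "\<delta> * real k = real w"
    and "real N = 2 powr (lam * real d)"
    and "\<gamma> * real d = real g" and "g \<le> d"
    and "i0 < N" and "j0 < N"
    and "\<pi> permutes {..<d}"
  shows "(\<forall>i \<in> {1..r}. expected_prod d N g i0 j0 \<pi> k w r i
            \<le> expected_prod d N g i0 j0 \<pi> k w r (i - 1) * (real (k choose w) / 2 ^ k) ^ 2 + 1)
       \<and> expected_prod d N g i0 j0 \<pi> k w r r
            \<le> 2 powr (2 * lam * real d) * (real (k choose w) / 2 ^ k) ^ (2 * r) + real r"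
proof -
  interpret bucketing d N g i0 j0 r k w \<pi>
    using assms by unfold_locales auto
  let ?q = "(real (k choose w) / 2 ^ k) ^ 2"
  have "real (k choose w) \<le> 2 ^ k"
    using binomial_le_pow2[of k w] by (metis of_nat_le_iff of_nat_numeral of_nat_power)
  then have "0 \<le> ?q" "?q \<le> 1"
    by (simp_all add: power_le_one)
  then have "expected_prod d N g i0 j0 \<pi> k w r r \<le> real N ^ 2 * ?q ^ r + real r"
    using affine_recurrence_bound[where e = "expected_prod d N g i0 j0 \<pi> k w r"]
      expected_prod_step expected_prod_root by simp
  moreover have "real N ^ 2 = 2 powr (2 * lam * real d)"
    using assms(5) by (simp add: power2_eq_square powr_add[symmetric] mult.assoc)
  ultimately show ?thesis
    using expected_prod_step by (simp add: power_mult)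
qed

end
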